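(* Let $k\ge1$, $G=(V,E)$ an inductively $k$-independent graph with $k$-independence ordering $v_1,\dots,v_n$, $f:2^V\to\mathbb{R}_{\ge0}$ monotone submodular with $f(\emptyset)=0$, and $\beta>0$. Let $S_{\mathrm{end}}$ and $w_1,\dots,w_n$ be as produced by Phase 1 of algorithm PD-MON (described in the context), and let $\mathrm{OPT}=\max\{f(T):T\text{ independent in }G\}$. Then \[ \mathrm{OPT}\le f(S_{\mathrm{end}})+k(1+\beta)\sum_{i=1}^n w_i. \]
   Context: $N(v)$ is the neighbourhood of $v$ (excluding $v$); $G$ is inductively $k$-independent with $k$-independence ordering $v_1,\dots,v_n$ if for every $i$, $G[N(v_i)\cap\{v_i,\dots,v_n\}]$ has no independent set of size more than $k$. For $S\subseteq V$, $f_S(v)=f(S\cup\{v\})-f(S)$. Phase 1 of algorithm PD-MON (parameter $\beta>0$): start with $S=\emptyset$ and $w_1=\dots=w_n=0$. For $i=1,\dots,n$: let $C_i=N(v_i)\cap S$ for the current $S$; if $f_S(v_i)>(1+\beta)\sum_{v_j\in C_i}w_j$, set $w_i=f_S(v_i)-\sum_{v_j\in C_i}w_j$ (with $S$ the set before insertion) and add $v_i$ to $S$; otherwise leave $w_i=0$. $S_{\mathrm{end}}$ is $S$ at the end of this phase. *)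

theory Defs
  imports Complex_Main
begin

definition simple_graph :: "'a set \<Rightarrow> ('a \<Rightarrow> 'a \<Rightarrow> bool) \<Rightarrow> bool" where
  "simple_graph V E \<longleftrightarrow> finite V \<and> (\<forall>u v. E u v \<longrightarrow> u \<in> V \<and> v \<in> V)
     \<and> (\<forall>u v. E u v \<longrightarrow> E v u) \<and> (\<forall>v. \<not> E v v)"

definition nbhd :: "'a set \<Rightarrow> ('a \<Rightarrow> 'a \<Rightarrow> bool) \<Rightarrow> 'a \<Rightarrow> 'a set" where
  "nbhd V E v = {u \<in> V. E v u}"

definition indep_set :: "'a set \<Rightarrow> ('a \<Rightarrow> 'a \<Rightarrow> bool) \<Rightarrow> 'a set \<Rightarrow> bool" where
  "indep_set V E I \<longleftrightarrow> I \<subseteq> V \<and> (\<forall>u\<in>I. \<forall>v\<in>I. \<not> E u v)"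

definition k_independence_ordering ::
  "nat \<Rightarrow> 'a set \<Rightarrow> ('a \<Rightarrow> 'a \<Rightarrow> bool) \<Rightarrow> 'a list \<Rightarrow> bool" where
  "k_independence_ordering k V E vs \<longleftrightarrow> distinct vs \<and> set vs = V \<and>
     (\<forall>i < length vs. \<forall>I. I \<subseteq> nbhd V E (vs ! i) \<inter> set (drop i vs) \<and> indep_set V E I
        \<longrightarrow> card I \<le> k)"

definition monotone_set_fun :: "'a set \<Rightarrow> ('a set \<Rightarrow> real) \<Rightarrow> bool" where
  "monotone_set_fun V f \<longleftrightarrow> (\<forall>A B. A \<subseteq> B \<and> B \<subseteq> V \<longrightarrow> f A \<le> f B)"

definition submodular :: "'a set \<Rightarrow> ('a set \<Rightarrow> real) \<Rightarrow> bool" where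
  "submodular V f \<longleftrightarrow> (\<forall>A B. A \<subseteq> V \<and> B \<subseteq> V \<longrightarrow> f (A \<union> B) + f (A \<inter> B) \<le> f A + f B)"

definition pd_step :: "('a \<Rightarrow> 'a \<Rightarrow> bool) \<Rightarrow> ('a set \<Rightarrow> real) \<Rightarrow> real \<Rightarrow> 'a
    \<Rightarrow> 'a set \<times> ('a \<Rightarrow> real) \<Rightarrow> 'a set \<times> ('a \<Rightarrow> real)" where
  "pd_step E f \<beta> v Sw = (let S = fst Sw; w = snd Sw; C = {u \<in> S. E v u};
       m = f (S \<union> {v}) - f S; s = (\<Sum>u\<in>C. w u)
     in if m > (1 + \<beta>) * s then (insert v S, w(v := m - s)) else (S, w(v := 0)))"

text \<open>Phase 1: start with S = {} and all weights 0, process v_1,...,v_n in order.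
  Returns (S_end, w) where w v_i is the weight w_i.\<close>
definition pd_phase1 :: "('a \<Rightarrow> 'a \<Rightarrow> bool) \<Rightarrow> ('a set \<Rightarrow> real) \<Rightarrow> real \<Rightarrow> 'a list
    \<Rightarrow> 'a set \<times> ('a \<Rightarrow> real)" where
  "pd_phase1 E f \<beta> vs = fold (pd_step E f \<beta>) vs ({}, (\<lambda>_. 0))"

end

theory Submission
  imports Defs
begin

text \<open>A vertex v of an independent set T that Phase 1 rejects had, when it was processed, marginal
  gain at most (1 + \<beta>) times the weight of its earlier neighbours in S. By submodularity the same
  bound holds for its marginal gain with respect to S_end, and the weights of those neighbours are
  final by then. Summing over T - S_end and exchanging the sums, each weight w_j is counted once for
  every vertex of T that is a later neighbour of v_j; these form an independent subset of the later
  neighbourhood of v_j, so there are at most k of them. Finally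
  f(T) \<le> f(S_end \<union> (T - S_end)) \<le> f(S_end) + (sum of the marginal gains of T - S_end).\<close>

lemma monotone_set_funD: "monotone_set_fun V f \<Longrightarrow> A \<subseteq> B \<Longrightarrow> B \<subseteq> V \<Longrightarrow> f A \<le> f B"
  unfolding monotone_set_fun_def by blast

lemma submodularD: "submodular V f \<Longrightarrow> A \<subseteq> V \<Longrightarrow> B \<subseteq> V \<Longrightarrow> f (A \<union> B) + f (A \<inter> B) \<le> f A + f B"
  unfolding submodular_def by blast

definition marginal_gain :: "('a set \<Rightarrow> real) \<Rightarrow> 'a set \<Rightarrow> 'a \<Rightarrow> real" where
  "marginal_gain f S v = f (S \<union> {v}) - f S"

lemma marginal_gain_antimono:
  assumes "monotone_set_fun V f" "submodular V f" "A \<subseteq> B" "B \<subseteq> V" "v \<in> V"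
  shows "marginal_gain f B v \<le> marginal_gain f A v"
proof (cases "v \<in> B")
  case True
  then have "B \<union> {v} = B" by auto
  moreover have "f A \<le> f (A \<union> {v})"
    using assms by (intro monotone_set_funD[of V]) auto
  ultimately show ?thesis unfolding marginal_gain_def by simp
next
  case False
  have "f ((A \<union> {v}) \<union> B) + f ((A \<union> {v}) \<inter> B) \<le> f (A \<union> {v}) + f B"
    using assms by (intro submodularD) auto
  moreover have "(A \<union> {v}) \<union> B = B \<union> {v}" "(A \<union> {v}) \<inter> B = A"
    using False assms(3) by auto
  ultimately show ?thesis unfolding marginal_gain_def by simp
qed

lemma submodular_union_le_sum_marginal_gain:
  assumes "monotone_set_fun V f" "submodular V f" "finite X" "S \<subseteq> V" "X \<subseteq> V"
  shows "f (S \<union> X) \<le> f S + (\<Sum>x\<in>X. marginal_gain f S x)"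
  using \<open>finite X\<close> \<open>X \<subseteq> V\<close>
proof (induction X rule: finite_induct)
  case empty
  then show ?case by simp
next
  case (insert x X)
  have "marginal_gain f (S \<union> X) x \<le> marginal_gain f S x"
    using insert.prems assms by (intro marginal_gain_antimono[of V]) auto
  moreover have "S \<union> insert x X = (S \<union> X) \<union> {x}" by auto
  ultimately show ?case
    using insert by (simp add: marginal_gain_def)
qed

lemma double_counting_le:
  fixes w :: "'b \<Rightarrow> real"
  assumes "finite A" "finite B"
    and "\<And>y. y \<in> B \<Longrightarrow> card {x \<in> A. R x y} \<le> k" "\<And>y. y \<in> B \<Longrightarrow> 0 \<le> w y"
  shows "(\<Sum>x\<in>A. \<Sum>y\<in>{y \<in> B. R x y}. w y) \<le> real k * (\<Sum>y\<in>B. w y)"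
proof -
  have "(\<Sum>x\<in>A. \<Sum>y\<in>{y \<in> B. R x y}. w y) = (\<Sum>y\<in>B. real (card {x \<in> A. R x y}) * w y)"
    unfolding sum.swap_restrict[OF assms(1,2)] by simp
  also have "\<dots> \<le> (\<Sum>y\<in>B. real k * w y)"
    using assms(3,4) by (intro sum_mono mult_right_mono) auto
  finally show ?thesis by (simp add: sum_distrib_left)
qed

lemma pd_step_fst_subset: "fst (pd_step E f \<beta> v Sw) \<subseteq> insert v (fst Sw)"
  unfolding pd_step_def Let_def by auto

lemma pd_step_fst_mono: "fst Sw \<subseteq> fst (pd_step E f \<beta> v Sw)"
  unfolding pd_step_def Let_def by auto

lemma pd_step_snd_other: "u \<noteq> v \<Longrightarrow> snd (pd_step E f \<beta> v Sw) u = snd Sw u"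
  unfolding pd_step_def Let_def by auto

lemma pd_step_snd_nonneg:
  assumes "\<beta> \<ge> 0" "\<And>u. 0 \<le> snd Sw u"
  shows "0 \<le> snd (pd_step E f \<beta> v Sw) u"
proof -
  let ?s = "\<Sum>u\<in>{u \<in> fst Sw. E v u}. snd Sw u"
  have "0 \<le> ?s" using assms(2) by (simp add: sum_nonneg)
  then have "?s \<le> (1 + \<beta>) * ?s" using assms(1) by (simp add: algebra_simps)
  then show ?thesis using assms(2) unfolding pd_step_def Let_def by auto
qed

lemma pd_step_rejected:
  assumes "v \<notin> fst (pd_step E f \<beta> v Sw)"
  shows "marginal_gain f (fst Sw) v \<le> (1 + \<beta>) * (\<Sum>u\<in>{u \<in> fst Sw. E v u}. snd Sw u)"
  using assms unfolding pd_step_def marginal_gain_def Let_def by (auto split: if_splits)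

lemma fold_pd_step_fst_mono: "fst Sw \<subseteq> fst (fold (pd_step E f \<beta>) ys Sw)"
proof (induction ys arbitrary: Sw)
  case Nil
  then show ?case by simp
next
  case (Cons y ys)
  then show ?case using pd_step_fst_mono[of Sw E f \<beta> y] by (simp add: order_trans)
qed

lemma fold_pd_step_fst_subset: "fst (fold (pd_step E f \<beta>) ys Sw) \<subseteq> fst Sw \<union> set ys"
proof (induction ys arbitrary: Sw)
  case Nil
  then show ?case by simp
next
  case (Cons y ys)
  then show ?case using pd_step_fst_subset[of E f \<beta> y Sw] by fastforce
qed

lemma fold_pd_step_snd_notin:
  "u \<notin> set ys \<Longrightarrow> snd (fold (pd_step E f \<beta>) ys Sw) u = snd Sw u"
  by (induction ys arbitrary: Sw) (auto simp: pd_step_snd_other)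

lemma fold_pd_step_snd_nonneg:
  "\<beta> \<ge> 0 \<Longrightarrow> (\<And>u. 0 \<le> snd Sw u) \<Longrightarrow> 0 \<le> snd (fold (pd_step E f \<beta>) ys Sw) u"
proof (induction ys arbitrary: Sw)
  case Nil
  then show ?case by simp
next
  case (Cons y ys)
  then show ?case using pd_step_snd_nonneg[of \<beta> Sw E f y] by simp
qed

definition pd_prefix :: "('a \<Rightarrow> 'a \<Rightarrow> bool) \<Rightarrow> ('a set \<Rightarrow> real) \<Rightarrow> real \<Rightarrow> 'a list \<Rightarrow> nat
    \<Rightarrow> 'a set \<times> ('a \<Rightarrow> real)" where
  "pd_prefix E f \<beta> vs i = fold (pd_step E f \<beta>) (take i vs) ({}, (\<lambda>_. 0))"

lemma pd_phase1_from_prefix: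
  "pd_phase1 E f \<beta> vs = fold (pd_step E f \<beta>) (drop i vs) (pd_prefix E f \<beta> vs i)"
  unfolding pd_phase1_def pd_prefix_def by (metis append_take_drop_id fold_append comp_apply)

lemma pd_prefix_fst_subset: "fst (pd_prefix E f \<beta> vs i) \<subseteq> set (take i vs)"
  using fold_pd_step_fst_subset[of E f \<beta> "take i vs" "({}, \<lambda>_. 0)"] unfolding pd_prefix_def by simp

lemma pd_phase1_fst_subset: "fst (pd_phase1 E f \<beta> vs) \<subseteq> set vs"
  using fold_pd_step_fst_subset[of E f \<beta> vs "({}, \<lambda>_. 0)"] unfolding pd_phase1_def by simp

lemma pd_phase1_snd_nonneg: "\<beta> \<ge> 0 \<Longrightarrow> 0 \<le> snd (pd_phase1 E f \<beta> vs) u"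
  unfolding pd_phase1_def by (rule fold_pd_step_snd_nonneg) auto

lemma pd_phase1_rejected:
  assumes "monotone_set_fun V f" "submodular V f" "\<beta> \<ge> 0"
    and "distinct vs" "set vs \<subseteq> V" "i < length vs"
    and rejected: "vs ! i \<notin> fst (pd_phase1 E f \<beta> vs)"
  defines "W \<equiv> snd (pd_phase1 E f \<beta> vs)"
  shows "marginal_gain f (fst (pd_phase1 E f \<beta> vs)) (vs ! i)
    \<le> (1 + \<beta>) * (\<Sum>j\<in>{j. j < i \<and> E (vs ! i) (vs ! j)}. W (vs ! j))"
proof -
  define v where "v = vs ! i"
  define Sw where "Sw = pd_prefix E f \<beta> vs i"
  have drop_i: "drop i vs = v # drop (Suc i) vs"
    unfolding v_def using assms(6) by (rule Cons_nth_drop_Suc[symmetric])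
  have end_state: "pd_phase1 E f \<beta> vs = fold (pd_step E f \<beta>) (drop (Suc i) vs) (pd_step E f \<beta> v Sw)"
    using pd_phase1_from_prefix[of E f \<beta> vs i] unfolding drop_i Sw_def by simp
  have step_le_end: "fst (pd_step E f \<beta> v Sw) \<subseteq> fst (pd_phase1 E f \<beta> vs)"
    unfolding end_state by (rule fold_pd_step_fst_mono)
  have prefix_le_end: "fst Sw \<subseteq> fst (pd_phase1 E f \<beta> vs)"
    using pd_step_fst_mono[of Sw E f \<beta> v] step_le_end by (rule order_trans)
  have prefix_before: "fst Sw \<subseteq> set (take i vs)"
    unfolding Sw_def by (rule pd_prefix_fst_subset)
  have "marginal_gain f (fst (pd_phase1 E f \<beta> vs)) v \<le> marginal_gain f (fst Sw) v"
    using assms(1,2,5,6) prefix_le_end pd_phase1_fst_subset[of E f \<beta> vs]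
    by (intro marginal_gain_antimono[of V]) (auto simp: v_def)
  also have "\<dots> \<le> (1 + \<beta>) * (\<Sum>u\<in>{u \<in> fst Sw. E v u}. snd Sw u)"
    using rejected step_le_end by (intro pd_step_rejected) (auto simp: v_def)
  also have "(\<Sum>u\<in>{u \<in> fst Sw. E v u}. snd Sw u) = (\<Sum>u\<in>{u \<in> fst Sw. E v u}. W u)"
  proof (rule sum.cong)
    fix u
    assume "u \<in> {u \<in> fst Sw. E v u}"
    then have "u \<notin> set (drop i vs)"
      using prefix_before set_take_disj_set_drop_if_distinct[OF assms(4), of i i] by auto
    then show "snd Sw u = W u"
      unfolding W_def pd_phase1_from_prefix[of E f \<beta> vs i] Sw_def
      by (simp add: fold_pd_step_snd_notin)
  qed simp
  also have "(\<Sum>u\<in>{u \<in> fst Sw. E v u}. W u) \<le> (\<Sum>u\<in>(!) vs ` {j. j < i \<and> E v (vs ! j)}. W u)"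
  proof (rule sum_mono2)
    show "{u \<in> fst Sw. E v u} \<subseteq> (!) vs ` {j. j < i \<and> E v (vs ! j)}"
      using prefix_before by (force simp: in_set_conv_nth)
  qed (auto simp: W_def pd_phase1_snd_nonneg assms(3))
  also have "\<dots> = (\<Sum>j\<in>{j. j < i \<and> E v (vs ! j)}. W (vs ! j))"
    using assms(4,6) by (subst sum.reindex) (auto intro!: inj_on_nth)
  finally show ?thesis
    using assms(3) unfolding v_def by (simp add: mult_left_mono)
qed

lemma k_independence_ordering_later_neighbours:
  assumes "simple_graph V E" "k_independence_ordering k V E vs"
    and "indep_set V E T" "j < length vs"
  shows "card {i \<in> {..<length vs}. vs ! i \<in> T \<and> j < i \<and> E (vs ! i) (vs ! j)} \<le> k"
    (is "card ?J \<le> k")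
proof -
  have "distinct vs" "set vs = V"
    using assms(2) unfolding k_independence_ordering_def by auto
  have "(!) vs ` ?J \<subseteq> nbhd V E (vs ! j) \<inter> set (drop j vs)"
  proof
    fix v
    assume "v \<in> (!) vs ` ?J"
    then obtain i where i: "i < length vs" "j < i" "E (vs ! i) (vs ! j)" "v = vs ! i" by auto
    have "drop j vs ! (i - j) = v" "i - j < length (drop j vs)" using i by auto
    then have "v \<in> set (drop j vs)" by (metis nth_mem)
    moreover have "v \<in> nbhd V E (vs ! j)"
      using assms(1) i unfolding simple_graph_def nbhd_def by auto
    ultimately show "v \<in> nbhd V E (vs ! j) \<inter> set (drop j vs)" by blast
  qed
  moreover have "indep_set V E ((!) vs ` ?J)"
    using assms(3) unfolding indep_set_def by auto
  ultimately have "card ((!) vs ` ?J) \<le> k"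
    using assms(2,4) unfolding k_independence_ordering_def by blast
  moreover have "inj_on ((!) vs) ?J"
    using \<open>distinct vs\<close> by (intro inj_on_nth) auto
  ultimately show ?thesis by (simp add: card_image)
qed

lemma k_independence_ordering_sum_earlier_neighbours:
  fixes w :: "nat \<Rightarrow> real"
  assumes "simple_graph V E" "k_independence_ordering k V E vs" "indep_set V E T"
    and "\<And>i. i \<in> I \<Longrightarrow> i < length vs \<and> vs ! i \<in> T" "\<And>j. 0 \<le> w j"
  shows "(\<Sum>i\<in>I. \<Sum>j\<in>{j \<in> {..<length vs}. j < i \<and> E (vs ! i) (vs ! j)}. w j)
    \<le> real k * (\<Sum>j<length vs. w j)"
proof (rule double_counting_le)
  show "finite I"
    using assms(4) by (meson finite_lessThan lessThan_iff finite_subset subsetI)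
  fix j
  assume j: "j \<in> {..<length vs}"
  have "card {i \<in> I. j < i \<and> E (vs ! i) (vs ! j)}
      \<le> card {i \<in> {..<length vs}. vs ! i \<in> T \<and> j < i \<and> E (vs ! i) (vs ! j)}"
    using assms(4) by (intro card_mono) auto
  also have "\<dots> \<le> k"
    using j by (intro k_independence_ordering_later_neighbours[OF assms(1-3)]) simp
  finally show "card {i \<in> I. j < i \<and> E (vs ! i) (vs ! j)} \<le> k" .
qed (use assms(5) in auto)

lemma pd_phase1_indep_bound:
  assumes "simple_graph V E" "k_independence_ordering k V E vs"
    and "monotone_set_fun V f" "submodular V f" "\<beta> \<ge> 0" "indep_set V E T"
  defines "S \<equiv> fst (pd_phase1 E f \<beta> vs)" and "W \<equiv> snd (pd_phase1 E f \<beta> vs)"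
  shows "f T \<le> f S + real k * (1 + \<beta>) * (\<Sum>i<length vs. W (vs ! i))"
proof -
  have "distinct vs" and set_vs: "set vs = V"
    using assms(2) unfolding k_independence_ordering_def by auto
  have "T \<subseteq> V" using assms(6) unfolding indep_set_def by simp
  have "S \<subseteq> V" using pd_phase1_fst_subset[of E f \<beta> vs] set_vs unfolding S_def by simp
  define I where "I = {i \<in> {..<length vs}. vs ! i \<in> T - S}"
  define earlier_nbrs where "earlier_nbrs i = {j \<in> {..<length vs}. j < i \<and> E (vs ! i) (vs ! j)}" for i
  have T_minus_S: "T - S = (!) vs ` I"
    using \<open>T \<subseteq> V\<close> set_vs unfolding I_def by (force simp: in_set_conv_nth)
  have "f T \<le> f (S \<union> (T - S))"
    using assms(3) \<open>T \<subseteq> V\<close> \<open>S \<subseteq> V\<close> by (intro monotone_set_funD[of V]) auto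
  also have "\<dots> \<le> f S + (\<Sum>v\<in>T - S. marginal_gain f S v)"
    using assms(3,4) \<open>T \<subseteq> V\<close> \<open>S \<subseteq> V\<close> finite_subset[OF \<open>T \<subseteq> V\<close>] set_vs
    by (intro submodular_union_le_sum_marginal_gain[of V]) auto
  also have "(\<Sum>v\<in>T - S. marginal_gain f S v) = (\<Sum>i\<in>I. marginal_gain f S (vs ! i))"
    unfolding T_minus_S using \<open>distinct vs\<close> by (subst sum.reindex) (auto intro!: inj_on_nth simp: I_def)
  also have "\<dots> \<le> (\<Sum>i\<in>I. (1 + \<beta>) * (\<Sum>j\<in>earlier_nbrs i. W (vs ! j)))"
  proof (rule sum_mono)
    fix i
    assume "i \<in> I"
    then have "{j. j < i \<and> E (vs ! i) (vs ! j)} = earlier_nbrs i"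
      unfolding I_def earlier_nbrs_def by auto
    with \<open>i \<in> I\<close> show "marginal_gain f S (vs ! i) \<le> (1 + \<beta>) * (\<Sum>j\<in>earlier_nbrs i. W (vs ! j))"
      using pd_phase1_rejected[OF assms(3,4,5) \<open>distinct vs\<close>, of i E] set_vs
      unfolding I_def S_def W_def by auto
  qed
  also have "\<dots> \<le> (1 + \<beta>) * (real k * (\<Sum>j<length vs. W (vs ! j)))"
    unfolding sum_distrib_left[symmetric] earlier_nbrs_def using assms(5)
    by (intro mult_left_mono k_independence_ordering_sum_earlier_neighbours[OF assms(1,2,6)])
      (auto simp: I_def W_def pd_phase1_snd_nonneg)
  finally show ?thesis by (simp add: algebra_simps)
qed

theorem corollary1:
  fixes k :: nat and V :: "'a set" and E :: "'a \<Rightarrow> 'a \<Rightarrow> bool" and vs :: "'a list"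
    and f :: "'a set \<Rightarrow> real" and \<beta> :: real
  assumes "k \<ge> 1"
    and "simple_graph V E"
    and "k_independence_ordering k V E vs"
    and "\<forall>A. A \<subseteq> V \<longrightarrow> f A \<ge> 0"
    and "monotone_set_fun V f"
    and "submodular V f"
    and "f {} = 0"
    and "\<beta> > 0"
  shows "Max (f ` {T. indep_set V E T})
    \<le> f (fst (pd_phase1 E f \<beta> vs))
       + real k * (1 + \<beta>) * (\<Sum>i<length vs. snd (pd_phase1 E f \<beta> vs) (vs ! i))"
proof -
  have "finite V" using assms(2) unfolding simple_graph_def by simp
  then have "finite {T. indep_set V E T}"
    by (rule finite_subset[rotated, OF finite_Pow_iff[THEN iffD2]]) (auto simp: indep_set_def)
  moreover have "indep_set V E {}" by (simp add: indep_set_def)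
  ultimately show ?thesis
    using pd_phase1_indep_bound[OF assms(2,3,5,6)] assms(8)
    by (subst Max_le_iff) auto
qed

end
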